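(* Let $N$ be a unary nfa in Chrobak normal form accepting the language $L\subseteq\{a\}^*$. Then $\mathrm{nsyn}(L)\le|N|$, the number of states of $N$.
   Context: A unary nfa is in Chrobak normal form if it has a single initial state $q_0$, its states consist of a path $q_0\xrightarrow{a}q_1\xrightarrow{a}\cdots\xrightarrow{a}q_m$ together with pairwise disjoint cycles $p_{i,0}\xrightarrow{a}p_{i,1}\xrightarrow{a}\cdots\xrightarrow{a}p_{i,\ell_i-1}\xrightarrow{a}p_{i,0}$ ($i=1,\ldots,k$), and the only further transitions are $q_m\xrightarrow{a}p_{i,0}$ for each $i$ (so $q_m$ is the only state that may have several successors); final states are arbitrary. $\mathrm{nsyn}(L)$ is the least number of states of a subatomic nfa accepting $L$, i.e. an nfa (several initial states allowed) all of whose states accept languages in the boolean algebra generated by the two-sided derivatives $u^{-1}Lv^{-1}=\{w:uwv\in L\}$. *)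

theory Defs
  imports Main
begin

text \<open>Nondeterministic finite automata with several initial states, over an
alphabet given by the type 'c; words are lists. A unary alphabet is the type unit.\<close>

record ('s, 'c) nfa =
  states :: "'s set"
  init   :: "'s set"
  trans  :: "'s \<Rightarrow> 'c \<Rightarrow> 's set"
  final  :: "'s set"

definition wf_nfa :: "('s, 'c) nfa \<Rightarrow> bool" where
  "wf_nfa N \<longleftrightarrow> finite (states N) \<and> init N \<subseteq> states N \<and> final N \<subseteq> states N \<and>
     (\<forall>q\<in>states N. \<forall>c. trans N q c \<subseteq> states N)"

fun reach :: "('s, 'c) nfa \<Rightarrow> 's \<Rightarrow> 'c list \<Rightarrow> 's set" where
  "reach N q [] = {q}"
| "reach N q (c # w) = (\<Union>p\<in>trans N q c. reach N p w)"

definition state_lang :: "('s, 'c) nfa \<Rightarrow> 's \<Rightarrow> 'c list set" where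
  "state_lang N q = {w. reach N q w \<inter> final N \<noteq> {}}"

definition lang :: "('s, 'c) nfa \<Rightarrow> 'c list set" where
  "lang N = (\<Union>q\<in>init N. state_lang N q)"

text \<open>The boolean algebra generated by the two-sided derivatives u^-1 L v^-1.\<close>
inductive_set deriv_algebra :: "'c list set \<Rightarrow> 'c list set set" for L where
  deriv: "{w. u @ w @ v \<in> L} \<in> deriv_algebra L"
| compl: "X \<in> deriv_algebra L \<Longrightarrow> - X \<in> deriv_algebra L"
| union: "X \<in> deriv_algebra L \<Longrightarrow> Y \<in> deriv_algebra L \<Longrightarrow> X \<union> Y \<in> deriv_algebra L"

definition subatomic :: "'c list set \<Rightarrow> ('s, 'c) nfa \<Rightarrow> bool" where
  "subatomic L N \<longleftrightarrow> wf_nfa N \<and> (\<forall>q\<in>states N. state_lang N q \<in> deriv_algebra L)"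

text \<open>Least number of states of a subatomic nfa accepting L (state names taken
from nat, which is no restriction for finite automata).\<close>
definition nsyn :: "'c list set \<Rightarrow> nat" where
  "nsyn L = (LEAST n. \<exists>N :: (nat, 'c) nfa. subatomic L N \<and> lang N = L \<and> card (states N) = n)"

text \<open>Chrobak normal form of a unary nfa: a path q_0 -> ... -> q_m followed by
disjoint cycles of lengths l_i (i < k), with q_m -> p_{i,0} for each i.\<close>
definition chrobak_nf :: "('s, unit) nfa \<Rightarrow> bool" where
  "chrobak_nf N \<longleftrightarrow> wf_nfa N \<and>
    (\<exists>(m::nat) (k::nat) (l::nat \<Rightarrow> nat) (q::nat \<Rightarrow> 's) (p::nat \<Rightarrow> nat \<Rightarrow> 's).
       (\<forall>i<k. l i \<ge> 1) \<and>
       inj_on q {0..m} \<and>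
       inj_on (\<lambda>(i, j). p i j) {(i, j). i < k \<and> j < l i} \<and>
       q ` {0..m} \<inter> (\<lambda>(i, j). p i j) ` {(i, j). i < k \<and> j < l i} = {} \<and>
       states N = q ` {0..m} \<union> (\<lambda>(i, j). p i j) ` {(i, j). i < k \<and> j < l i} \<and>
       init N = {q 0} \<and>
       (\<forall>j<m. trans N (q j) () = {q (Suc j)}) \<and>
       trans N (q m) () = {p i 0 | i. i < k} \<and>
       (\<forall>i<k. \<forall>j<l i. trans N (p i j) () = {p i (Suc j mod l i)}))"

end

theory Submission imports Defs begin

text \<open>Keep the transitions of N and only change its final states. A path state q_j keeps
its status; its language is then the derivative (a^j)^-1 L. A cycle state p_{i,r} is made
final iff a^(m+1+r+t*l_i) \<in> L for every t, so that its language becomes the intersection of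
the derivatives (a^(m+1+r+t*l_i))^-1 L; only finitely many of them are distinct because
beyond the path L is periodic with period \<Prod>i. l_i. From q_0 the new automaton still accepts L:
a word of length m+1+s reaches p_{i, s mod l_i} for every i, and some of these is newly final
iff one of them was final before.\<close>

lemma reach_subset_states:
  assumes "wf_nfa N" "s \<in> states N"
  shows "reach N s w \<subseteq> states N"
  using assms(2)
proof (induction w arbitrary: s)
  case (Cons c w)
  then have "trans N s c \<subseteq> states N" using assms(1) unfolding wf_nfa_def by blast
  with Cons.IH show ?case by auto
qed simp

lemma reach_cong_trans: "trans N' = trans N \<Longrightarrow> reach N' s w = reach N s w"
  by (induction w arbitrary: s) auto

definition nfa_image :: "('s \<Rightarrow> 't) \<Rightarrow> ('s, 'c) nfa \<Rightarrow> ('t, 'c) nfa" where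
  "nfa_image f N = \<lparr>states = f ` states N, init = f ` init N,
     trans = (\<lambda>x c. f ` trans N (inv_into (states N) f x) c), final = f ` final N\<rparr>"

lemma nfa_image_simps [simp]:
  "states (nfa_image f N) = f ` states N"
  "init (nfa_image f N) = f ` init N"
  "trans (nfa_image f N) x c = f ` trans N (inv_into (states N) f x) c"
  "final (nfa_image f N) = f ` final N"
  by (simp_all add: nfa_image_def)

context
  fixes f :: "'s \<Rightarrow> 't" and N :: "('s, 'c) nfa"
  assumes wf: "wf_nfa N" and inj: "inj_on f (states N)"
begin

lemma reach_nfa_image:
  "s \<in> states N \<Longrightarrow> reach (nfa_image f N) (f s) w = f ` reach N s w"
proof (induction w arbitrary: s)
  case (Cons c w)
  then have "trans N s c \<subseteq> states N" using wf unfolding wf_nfa_def by blast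
  then have "reach (nfa_image f N) (f s) (c # w) = (\<Union>s'\<in>trans N s c. f ` reach N s' w)"
    using Cons by (simp add: inv_into_f_f[OF inj] subset_eq)
  then show ?case by (simp add: image_UN)
qed simp

lemma state_lang_nfa_image:
  assumes "s \<in> states N"
  shows "state_lang (nfa_image f N) (f s) = state_lang N s"
proof -
  have "f ` reach N s w \<inter> f ` final N = f ` (reach N s w \<inter> final N)" for w
    using inj_on_image_Int[OF inj reach_subset_states[OF wf assms]] wf
    unfolding wf_nfa_def by blast
  then show ?thesis
    unfolding state_lang_def using reach_nfa_image[OF assms] by simp
qed

lemma wf_nfa_image: "wf_nfa (nfa_image f N)"
proof -
  have "trans (nfa_image f N) (f s) c \<subseteq> f ` states N" if "s \<in> states N" for s c
    using wf that unfolding wf_nfa_def by (simp add: inv_into_f_f[OF inj] image_mono)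
  then show ?thesis using wf unfolding wf_nfa_def by (simp add: image_mono)
qed

lemma lang_nfa_image: "lang (nfa_image f N) = lang N"
proof -
  have "init N \<subseteq> states N" using wf unfolding wf_nfa_def by blast
  then show ?thesis unfolding lang_def using state_lang_nfa_image by (auto simp: subset_eq)
qed

lemma subatomic_nfa_image: "subatomic L N \<Longrightarrow> subatomic L (nfa_image f N)"
  unfolding subatomic_def using wf_nfa_image state_lang_nfa_image by auto

end

lemma nsyn_le_subatomic:
  fixes N :: "('s, 'c) nfa"
  assumes "subatomic L N" and "lang N = L"
  shows "nsyn L \<le> card (states N)"
proof -
  have wf: "wf_nfa N" using assms(1) unfolding subatomic_def by simp
  then have "finite (states N)" unfolding wf_nfa_def by simp
  then obtain f :: "'s \<Rightarrow> nat" where "bij_betw f (states N) {0..<card (states N)}"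
    using ex_bij_betw_finite_nat by blast
  then have inj: "inj_on f (states N)" by (rule bij_betw_imp_inj_on)
  have "subatomic L (nfa_image f N)" using subatomic_nfa_image[OF wf inj assms(1)] .
  moreover have "lang (nfa_image f N) = L" using lang_nfa_image[OF wf inj] assms(2) by simp
  moreover have "card (states (nfa_image f N)) = card (states N)" using card_image[OF inj] by simp
  ultimately show ?thesis unfolding nsyn_def by (intro Least_le) blast
qed

lemma deriv_algebra_Int:
  "X \<in> deriv_algebra L \<Longrightarrow> Y \<in> deriv_algebra L \<Longrightarrow> X \<inter> Y \<in> deriv_algebra L"
  using deriv_algebra.union[of "- X" L "- Y"] deriv_algebra.compl[of _ L]
  by (metis Compl_Un double_compl)

lemma deriv_algebra_UNIV: "UNIV \<in> deriv_algebra L"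
  using deriv_algebra.union[OF deriv_algebra.deriv deriv_algebra.compl[OF deriv_algebra.deriv]]
  by (metis Compl_partition)

lemma deriv_algebra_INT:
  assumes "finite I" and "\<And>t. t \<in> I \<Longrightarrow> X t \<in> deriv_algebra L"
  shows "(\<Inter>t\<in>I. X t) \<in> deriv_algebra L"
  using assms(2)
  by (induct rule: finite_induct[OF assms(1)]) (auto intro: deriv_algebra_UNIV deriv_algebra_Int)

lemma periodic_add_mult:
  fixes P :: "nat \<Rightarrow> bool"
  assumes "\<And>n. P (n + K) = P n"
  shows "P (n + j * K) = P n"
proof (induction j)
  case (Suc j)
  have "n + Suc j * K = (n + j * K) + K" by simp
  then show ?case using assms Suc.IH by metis
qed simp

lemma all_progression_periodic:
  fixes P :: "nat \<Rightarrow> bool"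
  assumes per: "\<And>n. P (n + K) = P n" and "K > 0"
  shows "(\<forall>t. P (r + t * c)) \<longleftrightarrow> (\<forall>t<K. P (r + t * c))"
proof (intro iffI allI)
  fix t
  assume "\<forall>t<K. P (r + t * c)"
  then have "P (r + (t mod K) * c)" using \<open>K > 0\<close> by simp
  moreover have "(t mod K) * c + (t div K * c) * K = t * c"
    by (metis add_mult_distrib mod_div_mult_eq mult.commute mult.left_commute)
  ultimately show "P (r + t * c)"
    using periodic_add_mult[of P K, OF per, of "r + (t mod K) * c" "t div K * c"]
    by (simp only: add.assoc)
qed simp

lemma all_progression_mod:
  fixes P :: "nat \<Rightarrow> bool"
  assumes per: "\<And>n. P (n + K) = P n" and "K > 0"
  shows "(\<forall>t. P (r mod c + t * c)) \<longleftrightarrow> (\<forall>t. P (r + t * c))"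
proof (intro iffI allI)
  fix t
  assume "\<forall>t. P (r mod c + t * c)"
  moreover have "r + t * c = r mod c + (r div c + t) * c"
    by (simp add: algebra_simps)
  ultimately show "P (r + t * c)" by simp
next
  fix t
  assume all: "\<forall>t. P (r + t * c)"
  \<comment> \<open>the multiples of c lost by reducing r are recovered by adding a multiple of K\<close>
  have "r mod c + t * c + (r div c * c) * K = r + (t + r div c * (K - 1)) * c"
    using \<open>K > 0\<close> by (cases K) (simp_all add: algebra_simps)
  then have "P (r mod c + t * c) = P (r + (t + r div c * (K - 1)) * c)"
    using periodic_add_mult[of P K, OF per, of "r mod c + t * c" "r div c * c"] by simp
  then show "P (r mod c + t * c)" using all by blast
qed

locale chrobak_nfa =
  fixes N :: "('s, unit) nfa" and m k :: nat and l :: "nat \<Rightarrow> nat"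
    and q :: "nat \<Rightarrow> 's" and p :: "nat \<Rightarrow> nat \<Rightarrow> 's"
  assumes wf: "wf_nfa N"
    and cycle_length_pos: "\<forall>i<k. l i \<ge> 1"
    and cycle_inj: "inj_on (\<lambda>(i, j). p i j) {(i, j). i < k \<and> j < l i}"
    and path_cycle_disjoint:
      "q ` {0..m} \<inter> (\<lambda>(i, j). p i j) ` {(i, j). i < k \<and> j < l i} = {}"
    and states_eq: "states N = q ` {0..m} \<union> (\<lambda>(i, j). p i j) ` {(i, j). i < k \<and> j < l i}"
    and init_eq: "init N = {q 0}"
    and trans_path: "\<forall>j<m. trans N (q j) () = {q (Suc j)}"
    and trans_branch: "trans N (q m) () = {p i 0 | i. i < k}"
    and trans_cycle: "\<forall>i<k. \<forall>j<l i. trans N (p i j) () = {p i (Suc j mod l i)}"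

lemma chrobak_nf_imp_chrobak_nfa:
  "chrobak_nf N \<Longrightarrow> \<exists>m k l q p. chrobak_nfa N m k l q p"
  unfolding chrobak_nf_def chrobak_nfa_def by (elim conjE exE) (intro exI conjI; assumption)

context chrobak_nfa
begin

lemma cycle_length_gt_0: "i < k \<Longrightarrow> 0 < l i"
  using cycle_length_pos by (simp add: Suc_le_eq)

lemma cycle_mem_image:
  "i < k \<Longrightarrow> r < l i \<Longrightarrow> p i r \<in> (\<lambda>(i, j). p i j) ` {(i, j). i < k \<and> j < l i}"
  by (intro image_eqI[where x = "(i, r)"]) auto

lemma path_ne_cycle:
  assumes "j \<le> m" "i < k" "r < l i"
  shows "q j \<noteq> p i r"
proof
  assume "q j = p i r"
  moreover have "q j \<in> q ` {0..m}" using assms(1) by simp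
  ultimately have "p i r \<in> q ` {0..m}" by simp
  then show False
    using equals0D[OF path_cycle_disjoint, of "p i r"] cycle_mem_image[OF assms(2,3)] by blast
qed

lemma cycle_eq_iff:
  "i < k \<Longrightarrow> r < l i \<Longrightarrow> i' < k \<Longrightarrow> r' < l i' \<Longrightarrow> p i r = p i' r' \<longleftrightarrow> i = i' \<and> r = r'"
  using inj_onD[OF cycle_inj, of "(i, r)" "(i', r')"] by auto

lemma reach_cycle:
  "i < k \<Longrightarrow> j < l i \<Longrightarrow> reach N (p i j) w = {p i ((j + length w) mod l i)}"
proof (induction w arbitrary: j)
  case (Cons c w)
  then have "Suc j mod l i < l i" using cycle_length_gt_0 by simp
  with Cons trans_cycle show ?case by (simp add: mod_add_left_eq)
qed simp

lemma reach_path: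
  "j \<le> m \<Longrightarrow> reach N (q j) w = (if j + length w \<le> m then {q (j + length w)}
     else (\<lambda>i. p i ((j + length w - Suc m) mod l i)) ` {..<k})"
proof (induction w arbitrary: j)
  case (Cons c w)
  show ?case
  proof (cases "j < m")
    case True
    then show ?thesis using Cons.IH[of "Suc j"] trans_path by simp
  next
    case False
    then have "j = m" using Cons.prems by simp
    have "reach N (q m) (c # w) = (\<Union>i<k. reach N (p i 0) w)"
      using trans_branch by auto
    also have "\<dots> = (\<lambda>i. p i (length w mod l i)) ` {..<k}"
      using reach_cycle cycle_length_gt_0 by auto
    finally show ?thesis using \<open>j = m\<close> by simp
  qed
qed simp

definition tail_accepts :: "nat \<Rightarrow> bool" where
  "tail_accepts s \<longleftrightarrow> (\<exists>i<k. p i (s mod l i) \<in> final N)"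

definition accepts :: "nat \<Rightarrow> bool" where
  "accepts n \<longleftrightarrow> (if n \<le> m then q n \<in> final N else tail_accepts (n - Suc m))"

lemma mem_lang_iff: "w \<in> lang N \<longleftrightarrow> accepts (length w)"
proof -
  have "w \<in> lang N \<longleftrightarrow> reach N (q 0) w \<inter> final N \<noteq> {}"
    using init_eq by (simp add: lang_def state_lang_def)
  also have "\<dots> \<longleftrightarrow> accepts (length w)"
    using reach_path[of 0 w] by (cases "length w \<le> m") (auto simp: accepts_def tail_accepts_def)
  finally show ?thesis .
qed

lemma tail_accepts_periodic: "tail_accepts (s + (\<Prod>i<k. l i)) = tail_accepts s"
proof -
  have "(s + (\<Prod>i<k. l i)) mod l i = s mod l i" if "i < k" for i
  proof -
    have "l i dvd (\<Prod>i<k. l i)" using that by (simp add: dvd_prodI)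
    then show ?thesis by (auto elim!: dvdE)
  qed
  then show ?thesis unfolding tail_accepts_def by auto
qed

lemma period_pos: "(\<Prod>i<k. l i) > 0"
  using cycle_length_gt_0 by simp

definition cycle_accepts :: "nat \<Rightarrow> nat \<Rightarrow> bool" where
  "cycle_accepts i r \<longleftrightarrow> (\<forall>t. tail_accepts (r + t * l i))"

lemma cycle_accepts_mod: "cycle_accepts i (r mod l i) = cycle_accepts i r"
  unfolding cycle_accepts_def
  using all_progression_mod[of tail_accepts, OF tail_accepts_periodic period_pos] .

lemma cycle_accepts_finite:
  "cycle_accepts i r \<longleftrightarrow> (\<forall>t<(\<Prod>i<k. l i). accepts (Suc m + r + t * l i))"
  unfolding cycle_accepts_def accepts_def
  using all_progression_periodic[of tail_accepts, OF tail_accepts_periodic period_pos] by simp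

lemma ex_cycle_accepts_iff: "(\<exists>i<k. cycle_accepts i s) \<longleftrightarrow> tail_accepts s"
proof
  assume "\<exists>i<k. cycle_accepts i s"
  then show "tail_accepts s" unfolding cycle_accepts_def by (metis add.right_neutral mult_0)
next
  assume "tail_accepts s"
  then obtain i where i: "i < k" "p i (s mod l i) \<in> final N" unfolding tail_accepts_def by blast
  then have "cycle_accepts i s"
    unfolding cycle_accepts_def tail_accepts_def by (auto intro!: exI[of _ i])
  then show "\<exists>i<k. cycle_accepts i s" using i(1) by blast
qed

definition saturated_final :: "'s set" where
  "saturated_final = q ` {j. j \<le> m \<and> q j \<in> final N} \<union>
     {p i r | i r. i < k \<and> r < l i \<and> cycle_accepts i r}"

definition saturated :: "('s, unit) nfa" where
  "saturated = N\<lparr>final := saturated_final\<rparr>"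

lemma path_mem_saturated_final: "j \<le> m \<Longrightarrow> q j \<in> saturated_final \<longleftrightarrow> q j \<in> final N"
  unfolding saturated_final_def using path_ne_cycle by auto

lemma cycle_mem_saturated_final:
  "i < k \<Longrightarrow> r < l i \<Longrightarrow> p i r \<in> saturated_final \<longleftrightarrow> cycle_accepts i r"
  unfolding saturated_final_def using path_ne_cycle cycle_eq_iff by fastforce

lemma cycle_mod_mem_saturated_final:
  "i < k \<Longrightarrow> p i (s mod l i) \<in> saturated_final \<longleftrightarrow> cycle_accepts i s"
  using cycle_mem_saturated_final[of i "s mod l i"] cycle_length_gt_0 cycle_accepts_mod by simp

lemma state_lang_saturated:
  "state_lang saturated s = {w. reach N s w \<inter> saturated_final \<noteq> {}}"
  unfolding state_lang_def saturated_def
  using reach_cong_trans[of "N\<lparr>final := saturated_final\<rparr>" N] by simp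

lemma state_lang_saturated_cycle:
  assumes "i < k" "r < l i"
  shows "state_lang saturated (p i r) = {w. cycle_accepts i (r + length w)}"
  unfolding state_lang_saturated using reach_cycle[OF assms] cycle_mod_mem_saturated_final[OF assms(1)]
  by simp

lemma state_lang_saturated_path:
  assumes "j \<le> m"
  shows "state_lang saturated (q j) = {w. accepts (j + length w)}"
proof -
  have "reach N (q j) w \<inter> saturated_final \<noteq> {} \<longleftrightarrow> accepts (j + length w)" for w
  proof (cases "j + length w \<le> m")
    case True
    then have "reach N (q j) w = {q (j + length w)}" using reach_path[OF assms] by simp
    then show ?thesis using True path_mem_saturated_final by (simp add: accepts_def)
  next
    case False
    define s where "s = j + length w - Suc m"
    have "reach N (q j) w = (\<lambda>i. p i (s mod l i)) ` {..<k}"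
      using reach_path[OF assms] False by (simp add: s_def)
    then have "reach N (q j) w \<inter> saturated_final \<noteq> {} \<longleftrightarrow>
        (\<exists>i<k. p i (s mod l i) \<in> saturated_final)" by auto
    also have "\<dots> \<longleftrightarrow> (\<exists>i<k. cycle_accepts i s)"
      using cycle_mod_mem_saturated_final by blast
    also have "\<dots> \<longleftrightarrow> accepts (j + length w)"
      using ex_cycle_accepts_iff False by (simp add: accepts_def s_def)
    finally show ?thesis .
  qed
  then show ?thesis unfolding state_lang_saturated by simp
qed

lemma lang_saturated: "lang saturated = lang N"
proof -
  have "lang saturated = state_lang saturated (q 0)"
    using init_eq by (simp add: lang_def saturated_def)
  also have "\<dots> = lang N" using state_lang_saturated_path[of 0] mem_lang_iff by auto
  finally show ?thesis .
qed

lemma subatomic_saturated: "subatomic (lang N) saturated"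
  unfolding subatomic_def
proof (intro conjI ballI)
  have "q ` {j. j \<le> m \<and> q j \<in> final N} \<subseteq> q ` {0..m}" by auto
  then have "saturated_final \<subseteq> states N"
    unfolding saturated_final_def states_eq using cycle_mem_image by blast
  then show "wf_nfa saturated" using wf unfolding wf_nfa_def saturated_def by simp
next
  fix s assume "s \<in> states saturated"
  then have "s \<in> q ` {0..m} \<union> (\<lambda>(i, j). p i j) ` {(i, j). i < k \<and> j < l i}"
    using states_eq by (simp add: saturated_def)
  then consider j where "j \<le> m" "s = q j" | i r where "i < k" "r < l i" "s = p i r"
    by auto
  then show "state_lang saturated s \<in> deriv_algebra (lang N)"
  proof cases
    case 1
    have "{w. replicate j () @ w @ [] \<in> lang N} \<in> deriv_algebra (lang N)"
      by (rule deriv_algebra.deriv)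
    then show ?thesis using 1 state_lang_saturated_path by (simp add: mem_lang_iff)
  next
    case 2
    have state_lang_eq: "state_lang saturated s =
        (\<Inter>t<(\<Prod>i<k. l i). {w. replicate (Suc m + r + t * l i) () @ w @ [] \<in> lang N})"
      using 2 by (auto simp: state_lang_saturated_cycle cycle_accepts_finite mem_lang_iff
          algebra_simps)
    show ?thesis unfolding state_lang_eq
      by (rule deriv_algebra_INT) (simp, rule deriv_algebra.deriv)
  qed
qed

lemma nsyn_lang_le_card: "nsyn (lang N) \<le> card (states N)"
proof -
  have "states saturated = states N" by (simp add: saturated_def)
  then show ?thesis using nsyn_le_subatomic[OF subatomic_saturated lang_saturated] by simp
qed

end

theorem mainTheorem16:
  fixes N :: "('s, unit) nfa" and L :: "unit list set"
  assumes "chrobak_nf N"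
    and "lang N = L"
  shows "nsyn L \<le> card (states N)"
proof -
  obtain m k l q p where "chrobak_nfa N m k l q p"
    using chrobak_nf_imp_chrobak_nfa[OF assms(1)] by (elim exE)
  from chrobak_nfa.nsyn_lang_le_card[OF this] show ?thesis using assms(2) by simp
qed

end
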